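(* Let $\Lambda$ be a finite or countable alphabet, $\mu$ a shift-invariant probability measure on $\Lambda^{\mathbb N}$, and $S\subset\mathbb N$ a set of positive lower density. If $\mu$ is disjoint from every measure derived from $S$, then $S$ preserves simple $\mu$-normality: for every $\mu$-normal $x\in\Lambda^{\mathbb N}$ and every $a\in\Lambda$, the symbol $a$ occurs in $x|_S$ with limiting frequency $\mu([a])$.
   Context: $x$ is $\mu$-normal if every finite block $B$ occurs in $x$ with limiting frequency $\mu([B])$. For $S=\{s_1<s_2<\dots\}$, $x|_S=(x_{s_1},x_{s_2},\dots)$. With $y=\mathbbm1_S$, a measure derived from $S$ is a weak-* accumulation point of $\frac1n\sum_{i<n}\delta_{\sigma^iy}$ on $\{0,1\}^{\mathbb N}$ ($\sigma$ the shift). Two invariant measures $\mu,\nu$ are disjoint if the only $\sigma\times\sigma$-invariant measure on the product space with marginals $\mu$ and $\nu$ is $\mu\times\nu$. Lower density $\underline d(S)=\liminf_n\#(S\cap\{1,\dots,n\})/n$. *)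

theory Defs
  imports "HOL-Probability.Probability" "HOL-Library.Infinite_Set"
begin

definition seq_space :: "(nat \<Rightarrow> 'a) measure" where
  "seq_space = PiM UNIV (\<lambda>_. count_space UNIV)"

definition shift :: "(nat \<Rightarrow> 'a) \<Rightarrow> (nat \<Rightarrow> 'a)" where
  "shift x = (\<lambda>n. x (Suc n))"

definition cylinder :: "'a list \<Rightarrow> (nat \<Rightarrow> 'a) set" where
  "cylinder B = {z. \<forall>j<length B. z j = B ! j}"

definition shift_invariant_prob :: "(nat \<Rightarrow> 'a) measure \<Rightarrow> bool" where
  "shift_invariant_prob \<mu> \<longleftrightarrow> prob_space \<mu> \<and> sets \<mu> = sets seq_space \<and>
     distr \<mu> seq_space shift = \<mu>"

definition normal :: "(nat \<Rightarrow> 'a) measure \<Rightarrow> (nat \<Rightarrow> 'a) \<Rightarrow> bool" where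
  "normal \<mu> x \<longleftrightarrow> (\<forall>B::'a list.
     (\<lambda>n. real (card {i. i < n \<and> (\<forall>j<length B. x (i + j) = B ! j)}) / real n)
       \<longlonglongrightarrow> measure \<mu> (cylinder B))"

definition restrict_seq :: "(nat \<Rightarrow> 'a) \<Rightarrow> nat set \<Rightarrow> (nat \<Rightarrow> 'a)" where
  "restrict_seq x S = (\<lambda>k. x (enumerate S k))"

definition lower_density :: "nat set \<Rightarrow> ereal" where
  "lower_density S = liminf (\<lambda>n. ereal (real (card (S \<inter> {..<n})) / real n))"

definition cantor_top :: "(nat \<Rightarrow> bool) topology" where
  "cantor_top = product_topology (\<lambda>_. discrete_topology UNIV) UNIV"

text \<open>\<nu> is a measure derived from S: a weak-* accumulation point of the empirical
  measures (1/n) \<Sum>_{i<n} \<delta>_{\<sigma>^i y}, y = indicator of S.\<close>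
definition derived_measure :: "nat set \<Rightarrow> (nat \<Rightarrow> bool) measure \<Rightarrow> bool" where
  "derived_measure S \<nu> \<longleftrightarrow> prob_space \<nu> \<and> sets \<nu> = sets seq_space \<and>
     (\<exists>r. strict_mono r \<and>
        (\<forall>f. continuous_map cantor_top euclideanreal f \<longrightarrow>
           (\<lambda>k. (\<Sum>i<r k. f ((shift ^^ i) (\<lambda>n. n \<in> S))) / real (r k))
             \<longlonglongrightarrow> (\<integral>z. f z \<partial>\<nu>)))"

definition disjoint_measures :: "(nat \<Rightarrow> 'a) measure \<Rightarrow> (nat \<Rightarrow> 'b) measure \<Rightarrow> bool" where
  "disjoint_measures \<mu> \<nu> \<longleftrightarrow> (\<forall>J. sets J = sets (\<mu> \<Otimes>\<^sub>M \<nu>) \<and>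
      distr J (\<mu> \<Otimes>\<^sub>M \<nu>) (map_prod shift shift) = J \<and>
      distr J \<mu> fst = \<mu> \<and> distr J \<nu> snd = \<nu> \<longrightarrow> J = \<mu> \<Otimes>\<^sub>M \<nu>)"

end

theory Submission
  imports Defs
begin

text \<open>Suppose the frequency of the letter \<open>a\<close> in \<open>x|\<^sub>S\<close> does not tend to \<open>\<mu>([a])\<close>. Since the
  \<open>n\<close>-th frequency in \<open>x|\<^sub>S\<close> equals the frequency of \<open>(a, 1)\<close> in \<open>z = (x, 1\<^sub>S)\<close> divided by the
  frequency of \<open>1\<close> in \<open>1\<^sub>S\<close>, both counted up to \<open>s\<^sub>n\<close>, we may pass to a subsequence of the times
  \<open>s\<^sub>n\<close> along which every block of \<open>z\<close> has a limiting frequency. As \<open>x\<close> is \<open>\<mu>\<close>-normal, no mass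
  escapes to infinity, so these limits are the cylinder weights of a shift-invariant
  probability measure on \<open>(\<Lambda> \<times> {0,1})\<^sup>\<nat>\<close>. Its first marginal is \<open>\<mu>\<close> and its second marginal
  \<open>\<nu>\<close> is derived from \<open>S\<close>, so it is a joining of \<open>\<mu>\<close> and \<open>\<nu>\<close>; by disjointness it is \<open>\<mu> \<times> \<nu>\<close>.
  Hence the ratio tends to \<open>\<mu>([a]) \<nu>([1]) / \<nu>([1]) = \<mu>([a])\<close> along the subsequence, where
  \<open>\<nu>([1])\<close> is at least the lower density of \<open>S\<close>, hence positive.\<close>

section \<open>Block frequencies\<close>

definition block :: "(nat \<Rightarrow> 'b) \<Rightarrow> nat \<Rightarrow> nat \<Rightarrow> 'b list" where
  "block z i n = map (\<lambda>j. z (i + j)) [0..<n]"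

definition block_count :: "(nat \<Rightarrow> 'b) \<Rightarrow> 'b list set \<Rightarrow> nat \<Rightarrow> nat \<Rightarrow> nat" where
  "block_count z W n m = card {i. i < m \<and> block z i n \<in> W}"

definition block_freq :: "(nat \<Rightarrow> 'b) \<Rightarrow> 'b list set \<Rightarrow> nat \<Rightarrow> nat \<Rightarrow> real" where
  "block_freq z W n m = real (block_count z W n m) / real m"

lemma length_block [simp]: "length (block z i n) = n"
  by (simp add: block_def)

lemma nth_block [simp]: "j < n \<Longrightarrow> block z i n ! j = z (i + j)"
  by (simp add: block_def)

lemma block_eq_iff: "block z i n = v \<longleftrightarrow> length v = n \<and> (\<forall>j<n. z (i + j) = v ! j)"
  by (auto simp: list_eq_iff_nth_eq)

lemma block_Suc: "block z i (Suc n) = z i # block z (Suc i) n"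
  unfolding block_def by (induct n) auto

lemma block_Suc_append: "block z i (Suc n) = block z i n @ [z (i + n)]"
  by (simp add: block_def)

lemma map_block: "map f (block z i n) = block (f \<circ> z) i n"
  by (simp add: block_def)

lemma block_count_le: "block_count z W n m \<le> m"
  unfolding block_count_def by (rule card_mono[of "{..<m}", simplified]) auto

lemma block_count_mono: "W \<subseteq> W' \<Longrightarrow> block_count z W n m \<le> block_count z W' n m"
  unfolding block_count_def by (rule card_mono) auto

lemma block_count_finite_sum:
  assumes "finite F"
  shows "block_count z F n m = (\<Sum>w\<in>F. block_count z {w} n m)"
proof -
  have "block_count z F n m = card (\<Union>w\<in>F. {i. i < m \<and> block z i n = w})"
    unfolding block_count_def by (rule arg_cong[where f = card]) auto
  also have "\<dots> = (\<Sum>w\<in>F. block_count z {w} n m)"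
    unfolding block_count_def by (subst card_UN_disjoint) (auto simp: assms)
  finally show ?thesis .
qed

lemma block_count_compl:
  "block_count z W n m + block_count z ({w. length w = n} - W) n m = m"
proof -
  have "{i. i < m \<and> block z i n \<in> W} \<union> {i. i < m \<and> block z i n \<in> {w. length w = n} - W} = {..<m}"
    by auto
  then show ?thesis
    unfolding block_count_def by (subst card_Un_disjoint[symmetric]) auto
qed

lemma block_count_append_letter:
  "block_count z (range (\<lambda>a. v @ [a])) (Suc (length v)) m = block_count z {v} (length v) m"
  unfolding block_count_def block_Suc_append by (rule arg_cong[where f = card]) auto

text \<open>Prepending an arbitrary letter shifts every occurrence by one position, which
  changes the count by at most one occurrence at either end of the window.\<close>
lemma block_count_prepend_letter:
  "block_count z (range (\<lambda>b. b # w)) (Suc (length w)) m \<le> block_count z {w} (length w) m + 1"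
  "block_count z {w} (length w) m \<le> block_count z (range (\<lambda>b. b # w)) (Suc (length w)) m + 1"
proof -
  define P where "P i \<longleftrightarrow> block z i (length w) = w" for i
  have Cons_eq: "block_count z (range (\<lambda>b. b # w)) (Suc (length w)) m = card {i. 0 < i \<and> i \<le> m \<and> P i}"
  proof -
    have "{i. 0 < i \<and> i \<le> m \<and> P i} = Suc ` {i. i < m \<and> P (Suc i)}"
      by (auto simp: image_iff) (metis Suc_less_eq Suc_pred le_imp_less_Suc)
    moreover have "{i. i < m \<and> block z i (Suc (length w)) \<in> range (\<lambda>b. b # w)} = {i. i < m \<and> P (Suc i)}"
      by (auto simp: block_Suc P_def)
    ultimately show ?thesis
      by (simp add: block_count_def card_image)
  qed
  have eq: "block_count z {w} (length w) m = card {i. i < m \<and> P i}"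
    by (simp add: block_count_def P_def)
  have "card {i. 0 < i \<and> i \<le> m \<and> P i} \<le> card (insert m {i. i < m \<and> P i})"
    by (rule card_mono) auto
  also have "\<dots> \<le> card {i. i < m \<and> P i} + 1"
    by (simp add: card_insert_if)
  finally show "block_count z (range (\<lambda>b. b # w)) (Suc (length w)) m \<le> block_count z {w} (length w) m + 1"
    using Cons_eq eq by simp
  have "card {i. i < m \<and> P i} \<le> card (insert 0 {i. 0 < i \<and> i \<le> m \<and> P i})"
    by (rule card_mono) auto
  also have "\<dots> \<le> card {i. 0 < i \<and> i \<le> m \<and> P i} + 1"
    by (simp add: card_insert_if)
  finally show "block_count z {w} (length w) m \<le> block_count z (range (\<lambda>b. b # w)) (Suc (length w)) m + 1"
    using Cons_eq eq by simp
qed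

lemma block_freq_nonneg: "0 \<le> block_freq z W n m"
  by (simp add: block_freq_def)

lemma block_freq_le_1: "block_freq z W n m \<le> 1"
  using block_count_le[of z W n m] by (cases "m = 0") (simp_all add: block_freq_def)

lemma block_freq_mono: "W \<subseteq> W' \<Longrightarrow> block_freq z W n m \<le> block_freq z W' n m"
  using block_count_mono[of W W' z n m] by (simp add: block_freq_def divide_right_mono)

lemma block_freq_finite_sum:
  "finite F \<Longrightarrow> block_freq z F n m = (\<Sum>w\<in>F. block_freq z {w} n m)"
  by (simp add: block_freq_def block_count_finite_sum[of F] sum_divide_distrib)

lemma block_freq_compl:
  "0 < m \<Longrightarrow> block_freq z W n m + block_freq z ({w. length w = n} - W) n m = 1"
  using block_count_compl[of z W n m]
  by (simp add: block_freq_def add_divide_distrib[symmetric] flip: of_nat_add)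

lemma block_freq_prepend_letter:
  "\<bar>block_freq z (range (\<lambda>b. b # w)) (Suc (length w)) m - block_freq z {w} (length w) m\<bar> \<le> 1 / real m"
  using block_count_prepend_letter[of z w m]
  by (simp add: block_freq_def diff_divide_distrib[symmetric] abs_divide divide_right_mono)

lemma finite_lists_length: "finite {v :: 'b::finite list. length v = n}"
  using finite_lists_length_eq[of "UNIV :: 'b set" n] by simp

lemma sum_block_fun:
  fixes h :: "'b::finite list \<Rightarrow> real"
  shows "(\<Sum>i<m. h (block z i n)) = (\<Sum>v\<in>{v. length v = n}. h v * real (block_count z {v} n m))"
proof -
  note fin = finite_lists_length[where 'b = 'b and n = n]
  have "(\<Sum>i<m. h (block z i n)) = (\<Sum>i<m. \<Sum>v\<in>{v. length v = n}. if block z i n = v then h v else 0)"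
    by (simp add: sum.delta'[OF fin])
  also have "\<dots> = (\<Sum>v\<in>{v. length v = n}. \<Sum>i<m. if block z i n = v then h v else 0)"
    by (rule sum.swap)
  also have "\<dots> = (\<Sum>v\<in>{v. length v = n}. h v * real (block_count z {v} n m))"
  proof (rule sum.cong)
    fix v
    have "(\<Sum>i<m. if block z i n = v then h v else 0) = (\<Sum>i\<in>{i\<in>{..<m}. block z i n = v}. h v)"
      by (rule sum.inter_filter[symmetric]) simp
    also have "{i\<in>{..<m}. block z i n = v} = {i. i < m \<and> block z i n \<in> {v}}"
      by auto
    finally show "(\<Sum>i<m. if block z i n = v then h v else 0) = h v * real (block_count z {v} n m)"
      by (simp add: block_count_def)
  qed simp
  finally show ?thesis .
qed

section \<open>Measures on the sequence space\<close>

lemma normal_imp_tendsto_block_freq: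
  "normal \<mu> x \<Longrightarrow> (\<lambda>m. block_freq x {u} (length u) m) \<longlonglongrightarrow> measure \<mu> (cylinder u)"
  by (simp add: normal_def block_freq_def block_count_def block_eq_iff)

lemma space_seq_space [simp]: "space seq_space = UNIV"
  by (auto simp: seq_space_def space_PiM PiE_iff)

lemma cylinder_eq_block: "cylinder v = {\<omega>. block \<omega> 0 (length v) = v}"
  by (auto simp: cylinder_def block_eq_iff)

lemma sets_cylinder [measurable]: "cylinder u \<in> sets seq_space"
proof -
  have "{\<omega> \<in> space seq_space. \<forall>j<length u. \<omega> j = u ! j} \<in> sets seq_space"
    unfolding seq_space_def by measurable
  then show ?thesis
    by (simp add: cylinder_def)
qed

lemma measurable_block [measurable]:
  "(\<lambda>\<omega>. block \<omega> i n) \<in> measurable (seq_space :: (nat \<Rightarrow> 'b::countable) measure) (count_space UNIV)"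
proof -
  have "(\<lambda>\<omega>. block \<omega> i n) -` {v} \<inter> space seq_space \<in> sets (seq_space :: (nat \<Rightarrow> 'b) measure)"
    for v :: "'b list"
  proof -
    have "{\<omega> \<in> space seq_space. length v = n \<and> (\<forall>j<n. \<omega> (i + j) = v ! j)}
        \<in> sets (seq_space :: (nat \<Rightarrow> 'b) measure)"
      unfolding seq_space_def by measurable
    then show ?thesis
      by (simp add: vimage_def block_eq_iff Int_def conj_commute)
  qed
  then show ?thesis
    by (subst measurable_count_space_eq_countable) auto
qed

lemma measurable_seq_map:
  "(\<lambda>\<omega> i. h (\<omega> (g i))) \<in> measurable (seq_space :: (nat \<Rightarrow> 'b) measure) (seq_space :: (nat \<Rightarrow> 'c) measure)"
  unfolding seq_space_def
  by (rule measurable_PiM_single') (auto intro: measurable_compose[OF measurable_component_singleton])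

lemma measurable_shift: "shift \<in> measurable seq_space seq_space"
  using measurable_seq_map[of "\<lambda>x. x" Suc] by (simp add: shift_def[abs_def])

lemma block_shift: "block (shift \<omega>) 0 n = block \<omega> 1 n"
  by (simp add: block_def shift_def)

lemma block_shift_power: "block ((shift ^^ i) \<omega>) 0 n = block \<omega> i n"
proof -
  have "(shift ^^ i) \<omega> = (\<lambda>j. \<omega> (j + i))"
    by (induction i) (simp_all add: shift_def)
  then show ?thesis
    by (simp add: block_def add.commute)
qed

lemma block_set_eq_UN_cylinder:
  "W \<subseteq> {w. length w = n} \<Longrightarrow> {\<omega>. block \<omega> 0 n \<in> W} = (\<Union>w\<in>W. cylinder w)"
  by (auto simp: cylinder_eq_block)

lemma disjoint_family_on_cylinder:
  assumes "W \<subseteq> {w. length w = n}"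
  shows "disjoint_family_on cylinder W"
  unfolding disjoint_family_on_def
proof (intro ballI impI)
  fix v w assume "v \<in> W" "w \<in> W" "v \<noteq> w"
  with assms have "length v = length w"
    by auto
  with \<open>v \<noteq> w\<close> show "cylinder v \<inter> cylinder w = {}"
    by (auto simp: cylinder_eq_block)
qed

text \<open>Every finite-dimensional rectangle is a countable disjoint union of cylinders of a
  fixed length.\<close>
lemma seq_space_measure_eqI:
  fixes P Q :: "(nat \<Rightarrow> 'b::countable) measure"
  assumes sets_P: "sets P = sets seq_space" and sets_Q: "sets Q = sets seq_space"
    and "finite_measure P"
    and eq: "\<And>u. emeasure P (cylinder u) = emeasure Q (cylinder u)"
  shows "P = Q"
proof (rule measure_eqI_PiM_infinite[where I = UNIV and M = "\<lambda>_. count_space UNIV"])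
  show "sets P = sets (PiM UNIV (\<lambda>_. count_space UNIV))" "sets Q = sets (PiM UNIV (\<lambda>_. count_space UNIV))"
    using sets_P sets_Q by (simp_all add: seq_space_def)
  show "finite_measure P" by fact
  fix J :: "nat set" and A :: "nat \<Rightarrow> 'b set"
  assume "finite J"
  then obtain n where n: "J \<subseteq> {..<n}"
    using finite_nat_bounded by blast
  define V where "V = {v :: 'b list. length v = n \<and> (\<forall>j\<in>J. v ! j \<in> A j)}"
  have "block \<omega> 0 n ! j = \<omega> j" if "j \<in> J" for \<omega> :: "nat \<Rightarrow> 'b" and j
    using n that by auto
  then have rectangle: "prod_emb UNIV (\<lambda>_. count_space UNIV) J (Pi\<^sub>E J A) = (\<Union>v\<in>V. cylinder v)"
    by (auto simp: prod_emb_def PiE_iff V_def cylinder_eq_block)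
  have V: "V \<subseteq> {v. length v = n}"
    by (auto simp: V_def)
  have "emeasure P (\<Union>v\<in>V. cylinder v) = (\<integral>\<^sup>+v. emeasure P (cylinder v) \<partial>count_space V)"
    using sets_P by (intro emeasure_UN_countable disjoint_family_on_cylinder[OF V]) auto
  also have "\<dots> = emeasure Q (\<Union>v\<in>V. cylinder v)"
    using sets_Q by (simp add: eq, intro emeasure_UN_countable[symmetric] disjoint_family_on_cylinder[OF V]) auto
  finally show "emeasure P (prod_emb UNIV (\<lambda>_. count_space UNIV) J (Pi\<^sub>E J A)) =
      emeasure Q (prod_emb UNIV (\<lambda>_. count_space UNIV) J (Pi\<^sub>E J A))"
    by (simp add: rectangle)
qed

lemma nn_integral_count_space_eq_infsum:
  fixes f :: "'b \<Rightarrow> real"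
  assumes "f summable_on A" "\<And>x. x \<in> A \<Longrightarrow> 0 \<le> f x"
  shows "(\<integral>\<^sup>+x. ennreal (f x) \<partial>count_space A) = ennreal (infsum f A)"
proof -
  have "Infinite_Set_Sum.abs_summable_on f A"
    using abs_summable_equivalent summable_on_iff_abs_summable_on_real assms(1) by metis
  then show ?thesis
    using nn_integral_conv_infsetsum infsetsum_infsum assms(2) by metis
qed

lemma has_sum_measure_cylinder:
  fixes M :: "(nat \<Rightarrow> 'b::countable) measure"
  assumes "finite_measure M" and sets_M: "sets M = sets seq_space" and W: "W \<subseteq> {w. length w = n}"
  shows "((\<lambda>w. measure M (cylinder w)) has_sum measure M {\<omega>. block \<omega> 0 n \<in> W}) W"
proof -
  interpret finite_measure M by fact
  have cyl: "cylinder w \<in> sets M" for w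
    by (simp add: sets_M)
  have "sum (\<lambda>w. measure M (cylinder w)) F \<le> measure M (space M)" if "F \<subseteq> W" "finite F" for F
  proof -
    have "sum (\<lambda>w. measure M (cylinder w)) F = measure M (\<Union>w\<in>F. cylinder w)"
      using that W cyl
      by (intro finite_measure_finite_Union[symmetric] disjoint_family_on_cylinder[of F n]) auto
    also have "\<dots> \<le> measure M (space M)"
      using cyl by (intro bounded_measure)
    finally show ?thesis .
  qed
  then have summable: "(\<lambda>w. measure M (cylinder w)) summable_on W"
    by (intro nonneg_bdd_above_summable_on bdd_aboveI2) auto
  have "emeasure M {\<omega>. block \<omega> 0 n \<in> W} = (\<integral>\<^sup>+w. emeasure M (cylinder w) \<partial>count_space W)"
    unfolding block_set_eq_UN_cylinder[OF W]
    using cyl by (intro emeasure_UN_countable disjoint_family_on_cylinder[OF W]) auto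
  also have "\<dots> = ennreal (infsum (\<lambda>w. measure M (cylinder w)) W)"
    by (simp add: emeasure_eq_measure nn_integral_count_space_eq_infsum summable)
  finally have "measure M {\<omega>. block \<omega> 0 n \<in> W} = infsum (\<lambda>w. measure M (cylinder w)) W"
    by (simp add: emeasure_eq_measure infsum_nonneg)
  then show ?thesis
    using summable by (simp add: summable_iff_has_sum_infsum)
qed

lemma distr_shift_eq_if_cylinder:
  fixes M :: "(nat \<Rightarrow> 'b::countable) measure"
  assumes "prob_space M" and sets_M: "sets M = sets seq_space"
    and Cons: "\<And>w. ((\<lambda>b. measure M (cylinder (b # w))) has_sum measure M (cylinder w)) UNIV"
  shows "distr M seq_space shift = M"
proof (rule seq_space_measure_eqI)
  interpret prob_space M by fact
  have shift: "shift \<in> measurable M seq_space"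
    using measurable_shift by (simp add: measurable_cong_sets[OF sets_M refl])
  show "sets (distr M seq_space shift) = sets seq_space" "sets M = sets seq_space"
    by (simp_all add: sets_M)
  show finite_distr: "finite_measure (distr M seq_space shift)"
    by (rule prob_space.finite_measure[OF prob_space_distr[OF shift]])
  fix w :: "'b list"
  define W where "W = range (\<lambda>b. b # w)"
  have W: "W \<subseteq> {v. length v = Suc (length w)}"
    by (auto simp: W_def)
  have "shift -` cylinder w \<inter> space M = {\<omega>. block \<omega> 0 (Suc (length w)) \<in> W}"
    by (auto simp: sets_eq_imp_space_eq[OF sets_M] cylinder_eq_block block_Suc block_shift W_def)
  then have "measure (distr M seq_space shift) (cylinder w) = measure M {\<omega>. block \<omega> 0 (Suc (length w)) \<in> W}"
    by (simp add: measure_distr[OF shift])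
  also have "\<dots> = measure M (cylinder w)"
  proof (rule has_sum_unique)
    show "((\<lambda>v. measure M (cylinder v)) has_sum measure M {\<omega>. block \<omega> 0 (Suc (length w)) \<in> W}) W"
      by (rule has_sum_measure_cylinder[OF finite_measure_axioms sets_M W])
    show "((\<lambda>v. measure M (cylinder v)) has_sum measure M (cylinder w)) W"
      unfolding W_def using Cons[of w] by (subst has_sum_reindex) (auto simp: inj_def o_def)
  qed
  finally show "emeasure (distr M seq_space shift) (cylinder w) = emeasure M (cylinder w)"
    by (simp add: finite_measure.emeasure_eq_measure[OF finite_distr] emeasure_eq_measure)
qed

section \<open>Measures with prescribed cylinder weights\<close>

lemma undefined_in_space_PiM_empty: "(\<lambda>_. undefined) \<in> space (PiM {0..<0 :: nat} M)"
  by (auto simp: space_PiM PiE_def extensional_def)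

locale consistent_cylinder_weights =
  fixes L :: "'b::countable list \<Rightarrow> real"
  assumes L_nonneg: "0 \<le> L w"
    and L_Nil: "L [] = 1"
    and has_sum_L_append: "((\<lambda>a. L (v @ [a])) has_sum L v) UNIV"
begin

lemma L_append_le: "L (v @ [a]) \<le> L v"
proof -
  have "sum (\<lambda>a. L (v @ [a])) {a} \<le> infsum (\<lambda>a. L (v @ [a])) UNIV"
    using has_sum_L_append[of v] by (intro finite_sum_le_infsum) (auto simp: L_nonneg has_sum_imp_summable)
  then show ?thesis
    using has_sum_L_append[of v] by (simp add: infsumI)
qed

abbreviation letter_space :: "nat \<Rightarrow> 'b measure" where
  "letter_space \<equiv> \<lambda>_. count_space UNIV"

text \<open>The distribution of the next letter after the prefix \<open>v\<close>; its choice when \<open>L v = 0\<close>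
  is irrelevant because the prefix then has probability zero.\<close>
definition next_letter :: "'b list \<Rightarrow> 'b measure" where
  "next_letter v = (if 0 < L v then density (count_space UNIV) (\<lambda>a. ennreal (L (v @ [a]) / L v))
     else return (count_space UNIV) undefined)"

lemma sets_next_letter [simp]: "sets (next_letter v) = sets (count_space UNIV)"
  by (simp add: next_letter_def)

lemma space_next_letter [simp]: "space (next_letter v) = UNIV"
  by (simp add: next_letter_def)

lemma prob_space_next_letter: "prob_space (next_letter v)"
proof (cases "0 < L v")
  case True
  have "((\<lambda>a. L (v @ [a]) / L v) has_sum L v / L v) UNIV"
    by (rule has_sum_divide_const[OF has_sum_L_append])
  then have sum: "((\<lambda>a. L (v @ [a]) / L v) has_sum 1) UNIV"
    using True by simp
  have "emeasure (next_letter v) UNIV = (\<integral>\<^sup>+a. ennreal (L (v @ [a]) / L v) \<partial>count_space UNIV)"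
    using True by (simp add: next_letter_def emeasure_density)
  also have "\<dots> = 1"
    using sum True L_nonneg
    by (simp add: nn_integral_count_space_eq_infsum has_sum_imp_summable infsumI)
  finally show ?thesis
    by (intro prob_spaceI) simp
next
  case False
  then show ?thesis
    by (simp add: next_letter_def prob_space_return)
qed

lemma emeasure_next_letter: "emeasure (next_letter v) {a} * ennreal (L v) = ennreal (L (v @ [a]))"
proof (cases "0 < L v")
  case True
  then have "emeasure (next_letter v) {a} * ennreal (L v) = ennreal (L (v @ [a]) / L v * L v)"
    by (simp add: next_letter_def emeasure_density ennreal_mult''[symmetric])
  then show ?thesis
    using True by simp
next
  case False
  then show ?thesis
    using L_append_le[of v a] L_nonneg[of v] L_nonneg[of "v @ [a]"] by simp
qed

definition letter_kernel :: "nat \<Rightarrow> (nat \<Rightarrow> 'b) \<Rightarrow> 'b measure" where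
  "letter_kernel i \<omega> = next_letter (map \<omega> [0..<i])"

lemma PiM_letter_space: "PiM {0..<n} letter_space = count_space (PiE {0..<n} (\<lambda>_. UNIV))"
  by (rule count_space_PiM_finite) auto

lemma measurable_letter_kernel:
  "letter_kernel i \<in> measurable (PiM {0..<i} letter_space) (subprob_algebra (letter_space i))"
  unfolding PiM_letter_space
  by (auto simp: space_subprob_algebra letter_kernel_def
      intro: prob_space_imp_subprob_space[OF prob_space_next_letter])

interpretation IT: Ionescu_Tulcea letter_kernel letter_space
  by (rule Ionescu_Tulcea.intro)
    (simp_all add: measurable_letter_kernel letter_kernel_def prob_space_next_letter)

definition cylinder_measure :: "(nat \<Rightarrow> 'b) measure" where
  "cylinder_measure = IT.PF.lim"

definition finite_cylinder :: "nat \<Rightarrow> 'b list \<Rightarrow> (nat \<Rightarrow> 'b) set" where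
  "finite_cylinder n w = {\<omega> \<in> space (PiM {0..<n} letter_space). \<forall>j<n. \<omega> j = w ! j}"

lemma sets_finite_cylinder: "finite_cylinder n w \<in> sets (PiM {0..<n} letter_space)"
  by (simp add: PiM_letter_space finite_cylinder_def)

lemma emeasure_eP_finite_cylinder:
  assumes \<omega>: "\<omega> \<in> space (PiM {0..<n} letter_space)" and "length v = n"
  shows "emeasure (IT.eP n \<omega>) (finite_cylinder (Suc n) (v @ [a]))
    = emeasure (next_letter v) {a} * indicator (finite_cylinder n v) \<omega>"
proof -
  have "(\<lambda>b. fun_upd \<omega> n b) -` finite_cylinder (Suc n) (v @ [a]) \<inter> space (letter_space n)
      = (if \<omega> \<in> finite_cylinder n v then {a} else {})"
  proof -
    have "fun_upd \<omega> n b \<in> space (PiM {0..<Suc n} letter_space)" for b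
      using \<omega> by (auto simp: space_PiM PiE_iff extensional_def)
    moreover have "(\<forall>j<Suc n. fun_upd \<omega> n b j = (v @ [a]) ! j) \<longleftrightarrow> (\<forall>j<n. \<omega> j = v ! j) \<and> b = a" for b
      using \<open>length v = n\<close> by (auto simp: nth_append less_Suc_eq)
    ultimately show ?thesis
      using \<omega> by (auto simp: finite_cylinder_def)
  qed
  moreover have "map \<omega> [0..<n] = v" if "\<omega> \<in> finite_cylinder n v"
    using that \<open>length v = n\<close> by (auto simp: finite_cylinder_def list_eq_iff_nth_eq)
  ultimately show ?thesis
    by (simp add: IT.emeasure_eP[OF \<omega> sets_finite_cylinder] letter_kernel_def)
qed

text \<open>\<open>IT.C 0 n (\<lambda>_. undefined)\<close> is the law of the first \<open>n\<close> letters, started from the empty history.\<close>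
lemma emeasure_C_finite_cylinder:
  "length w = n \<Longrightarrow> emeasure (IT.C 0 n (\<lambda>_. undefined)) (finite_cylinder n w) = ennreal (L w)"
proof (induction n arbitrary: w)
  case 0
  have "finite_cylinder 0 w = space (PiM {0..<0} letter_space)"
    by (simp add: finite_cylinder_def)
  then show ?case
    using 0 L_Nil undefined_in_space_PiM_empty by simp
next
  case (Suc n)
  obtain v a where w: "w = v @ [a]" and v: "length v = n"
    using Suc.prems by (cases w rule: rev_cases) auto
  define C where "C = IT.C 0 n (\<lambda>_. undefined)"
  note undef = undefined_in_space_PiM_empty[of letter_space]
  have sets_C: "sets C = sets (PiM {0..<n} letter_space)"
    unfolding C_def using IT.sets_C[OF undef, of n] by simp
  have space_C: "space C = space (PiM {0..<n} letter_space)"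
    unfolding C_def using IT.space_C[OF undef, of n] by simp
  have eP: "IT.eP n \<in> measurable C (subprob_algebra (PiM {0..<Suc n} letter_space))"
    by (subst measurable_cong_sets[OF sets_C refl]) (rule IT.measurable_eP)
  have "emeasure (IT.C 0 (Suc n) (\<lambda>_. undefined)) (finite_cylinder (Suc n) w)
      = (\<integral>\<^sup>+\<omega>. emeasure (IT.eP n \<omega>) (finite_cylinder (Suc n) w) \<partial>C)"
    using emeasure_bind[OF _ eP sets_finite_cylinder] by (simp add: C_def[symmetric] space_C)
  also have "\<dots> = (\<integral>\<^sup>+\<omega>. emeasure (next_letter v) {a} * indicator (finite_cylinder n v) \<omega> \<partial>C)"
    by (rule nn_integral_cong) (simp add: w emeasure_eP_finite_cylinder v space_C)
  also have "\<dots> = emeasure (next_letter v) {a} * emeasure C (finite_cylinder n v)"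
    by (rule nn_integral_cmult_indicator) (simp add: sets_C sets_finite_cylinder)
  also have "emeasure C (finite_cylinder n v) = ennreal (L v)"
    unfolding C_def by (rule Suc.IH[OF v])
  finally show ?case
    by (simp add: w emeasure_next_letter)
qed

lemma sets_cylinder_measure [measurable_cong]: "sets cylinder_measure = sets seq_space"
  by (simp add: cylinder_measure_def seq_space_def)

lemma emeasure_cylinder_measure: "emeasure cylinder_measure (cylinder w) = ennreal (L w)"
proof -
  define n where "n = length w"
  have "cylinder w = prod_emb UNIV letter_space {0..<n} (finite_cylinder n w)"
    by (auto simp: cylinder_def finite_cylinder_def prod_emb_def space_PiM PiE_iff n_def)
  then have "emeasure cylinder_measure (cylinder w) = emeasure (IT.CI {0..<n}) (finite_cylinder n w)"
    unfolding cylinder_measure_def by (simp add: IT.lim sets_finite_cylinder)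
  also have "\<dots> = emeasure (IT.C 0 n (\<lambda>_. undefined)) (finite_cylinder n w)"
    by (subst IT.emeasure_CI) (auto simp: sets_finite_cylinder prod_emb_id finite_cylinder_def space_PiM)
  finally show ?thesis
    by (simp add: emeasure_C_finite_cylinder n_def)
qed

lemma prob_space_cylinder_measure: "prob_space cylinder_measure"
proof
  have "space cylinder_measure = cylinder []"
    by (simp add: sets_eq_imp_space_eq[OF sets_cylinder_measure] cylinder_def)
  then show "emeasure cylinder_measure (space cylinder_measure) = 1"
    by (simp add: emeasure_cylinder_measure L_Nil)
qed

lemma measure_cylinder_measure: "measure cylinder_measure (cylinder w) = L w"
  by (simp add: measure_def emeasure_cylinder_measure L_nonneg)

end

section \<open>Limits of block frequencies\<close>

locale block_frequency_limits =
  fixes z :: "nat \<Rightarrow> 'b::countable" and R :: "nat \<Rightarrow> nat" and L :: "'b list \<Rightarrow> real"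
  assumes strict_mono_R: "strict_mono R"
    and tendsto_L: "(\<lambda>k. block_freq z {w} (length w) (R k)) \<longlonglongrightarrow> L w"
begin

lemma L_nonneg: "0 \<le> L w"
  by (rule LIMSEQ_le_const[OF tendsto_L]) (auto intro: block_freq_nonneg)

lemma eventually_R_pos: "eventually (\<lambda>k. 0 < R k) sequentially"
proof -
  have "0 < R k" if "1 \<le> k" for k
    using that seq_suble[OF strict_mono_R, of k] by linarith
  then show ?thesis
    unfolding eventually_sequentially by blast
qed

lemma tendsto_block_freq_R:
  "(\<lambda>m. block_freq z' W n m) \<longlonglongrightarrow> l \<Longrightarrow> (\<lambda>k. block_freq z' W n (R k)) \<longlonglongrightarrow> l"
  using LIMSEQ_subseq_LIMSEQ[OF _ strict_mono_R] by (auto simp: o_def)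

lemma L_Nil: "L [] = 1"
proof -
  have "eventually (\<lambda>k. block_freq z {[]} 0 (R k) = 1) sequentially"
    using eventually_R_pos by eventually_elim (simp add: block_freq_def block_count_def block_def)
  then have "(\<lambda>k. block_freq z {[]} 0 (R k)) \<longlonglongrightarrow> 1"
    by (rule tendsto_eventually)
  then show ?thesis
    using tendsto_L[of "[]"] LIMSEQ_unique by auto
qed

lemma tendsto_sum_L:
  assumes "finite F" "F \<subseteq> {w. length w = n}"
  shows "(\<lambda>k. block_freq z F n (R k)) \<longlonglongrightarrow> sum L F"
proof -
  have "block_freq z F n m = (\<Sum>w\<in>F. block_freq z {w} (length w) m)" for m
    unfolding block_freq_finite_sum[OF assms(1)] using assms(2) by (intro sum.cong) auto
  then show ?thesis
    by (simp add: tendsto_sum tendsto_L)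
qed

lemma sum_L_le_1: "finite F \<Longrightarrow> F \<subseteq> {w. length w = n} \<Longrightarrow> sum L F \<le> 1"
  by (rule LIMSEQ_le_const2[OF tendsto_sum_L]) (auto intro: block_freq_le_1)

lemma summable_L: "W \<subseteq> {w. length w = n} \<Longrightarrow> L summable_on W"
  by (rule nonneg_bdd_above_summable_on)
    (auto simp: L_nonneg intro!: bdd_aboveI2[of _ _ 1] sum_L_le_1)

lemma finite_vimage_map:
  assumes "\<And>c. finite (p -` {c})"
  shows "finite {w. map p w = u}"
proof (rule finite_subset)
  show "{w. map p w = u} \<subseteq> {w. set w \<subseteq> p -` set u \<and> length w = length u}"
    by auto
  have "p -` set u = (\<Union>c\<in>set u. p -` {c})"
    by auto
  then show "finite {w. set w \<subseteq> p -` set u \<and> length w = length u}"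
    using assms by (intro finite_lists_length_eq) auto
qed

lemma sum_L_vimage_map:
  assumes "\<And>c. finite (p -` {c})"
    and "(\<lambda>k. block_freq (p \<circ> z) {u} (length u) (R k)) \<longlonglongrightarrow> l"
  shows "sum L {w. map p w = u} = l"
proof -
  have "block_freq z {w. map p w = u} (length u) m = block_freq (p \<circ> z) {u} (length u) m" for m
    by (simp add: block_freq_def block_count_def map_block)
  then have "(\<lambda>k. block_freq z {w. map p w = u} (length u) (R k)) \<longlonglongrightarrow> l"
    using assms(2) by simp
  moreover have "(\<lambda>k. block_freq z {w. map p w = u} (length u) (R k)) \<longlonglongrightarrow> sum L {w. map p w = u}"
    using finite_vimage_map[OF assms(1)] by (intro tendsto_sum_L) auto
  ultimately show ?thesis
    using LIMSEQ_unique by blast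
qed

text \<open>No mass escapes to infinity when the image of \<open>z\<close> under a letter map with finite fibres
  has the limiting block frequencies of a probability measure.\<close>
lemma infsum_L_eq_1:
  fixes p :: "'b \<Rightarrow> 'c::countable" and \<mu> :: "(nat \<Rightarrow> 'c) measure"
  assumes "prob_space \<mu>" and sets_\<mu>: "sets \<mu> = sets seq_space"
    and finite_fibres: "\<And>c. finite (p -` {c})"
    and marginal: "\<And>u. (\<lambda>k. block_freq (p \<circ> z) {u} (length u) (R k)) \<longlonglongrightarrow> measure \<mu> (cylinder u)"
  shows "infsum L {w. length w = n} = 1"
proof (rule antisym)
  interpret prob_space \<mu> by fact
  show "infsum L {w. length w = n} \<le> 1"
    by (rule infsum_le_finite_sums[OF summable_L[of _ n]]) (auto intro: sum_L_le_1)
  note sum_fibre = sum_L_vimage_map[OF finite_fibres marginal]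
  show "1 \<le> infsum L {w. length w = n}"
  proof (rule field_le_epsilon)
    fix e :: real
    assume "0 < e"
    have "((\<lambda>u. measure \<mu> (cylinder u)) has_sum measure \<mu> {\<omega>. block \<omega> 0 n \<in> {u. length u = n}}) {u. length u = n}"
      by (rule has_sum_measure_cylinder[OF finite_measure_axioms sets_\<mu>]) simp
    then have "((\<lambda>u. measure \<mu> (cylinder u)) has_sum 1) {u. length u = n}"
      using prob_space sets_eq_imp_space_eq[OF sets_\<mu>] by simp
    from has_sum_finite_approximation[OF this \<open>0 < e\<close>] obtain U where
      U: "finite U" "U \<subseteq> {u. length u = n}" "dist (sum (\<lambda>u. measure \<mu> (cylinder u)) U) 1 \<le> e"
      by blast
    define F where "F = (\<Union>u\<in>U. {w. map p w = u})"
    have F: "finite F" "F \<subseteq> {w. length w = n}"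
      using U finite_vimage_map[OF finite_fibres] by (auto simp: F_def)
    have "sum (\<lambda>u. measure \<mu> (cylinder u)) U = sum L F"
      unfolding F_def sum_fibre[symmetric] using U(1) finite_vimage_map[OF finite_fibres]
      by (intro sum.UNION_disjoint[symmetric]) auto
    also have "\<dots> \<le> infsum L {w. length w = n}"
      using F by (intro finite_sum_le_infsum summable_L[of _ n]) (auto simp: L_nonneg)
    finally show "1 \<le> infsum L {w. length w = n} + e"
      using U(3) by (simp add: dist_real_def)
  qed
qed

end

locale tight_block_frequency_limits = block_frequency_limits +
  assumes infsum_L: "infsum L {w. length w = n} = 1"
begin

text \<open>Tightness upgrades the convergence of the frequencies of single blocks to the
  convergence of the frequencies of arbitrary, possibly infinite, sets of blocks.\<close>
lemma tendsto_infsum_L: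
  assumes W: "W \<subseteq> {w. length w = n}"
  shows "(\<lambda>k. block_freq z W n (R k)) \<longlonglongrightarrow> infsum L W"
proof (rule tendstoI)
  fix e :: real
  assume "0 < e"
  define W' where "W' = {w. length w = n} - W"
  have W': "W' \<subseteq> {w. length w = n}"
    by (simp add: W'_def)
  have total: "infsum L W + infsum L W' = 1"
    using infsum_Un_disjoint[OF summable_L[OF W] summable_L[OF W']] W infsum_L[of n]
    by (simp add: W'_def Un_absorb1)
  have lower: "eventually (\<lambda>k. infsum L V - e / 2 < block_freq z V n (R k)) sequentially"
    if V: "V \<subseteq> {w. length w = n}" for V
  proof -
    obtain F where F: "finite F" "F \<subseteq> V" "dist (sum L F) (infsum L V) \<le> e / 4"
      using infsum_finite_approximation[OF summable_L[OF V], of "e / 4"] \<open>0 < e\<close> by auto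
    have "infsum L V - e / 2 < sum L F"
      using F(3) \<open>0 < e\<close> unfolding dist_real_def abs_le_iff by linarith
    then have "eventually (\<lambda>k. infsum L V - e / 2 < block_freq z F n (R k)) sequentially"
      using F V by (intro order_tendstoD(1)[OF tendsto_sum_L]) auto
    then show ?thesis
      by eventually_elim (rule less_le_trans[OF _ block_freq_mono[OF F(2)]])
  qed
  show "eventually (\<lambda>k. dist (block_freq z W n (R k)) (infsum L W) < e) sequentially"
    using lower[OF W] lower[OF W'] eventually_R_pos
  proof eventually_elim
    case (elim k)
    then show ?case
      using block_freq_compl[of "R k" z W n] total by (simp add: W'_def dist_real_def abs_less_iff)
  qed
qed

lemma has_sum_L_if_tendsto:
  assumes "W \<subseteq> {w. length w = n}" "(\<lambda>k. block_freq z W n (R k)) \<longlonglongrightarrow> l"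
  shows "(L has_sum l) W"
proof -
  have "infsum L W = l"
    using tendsto_infsum_L[OF assms(1)] assms(2) LIMSEQ_unique by blast
  then show ?thesis
    using summable_L[OF assms(1)] by (simp add: summable_iff_has_sum_infsum)
qed

lemma has_sum_L_append: "((\<lambda>a. L (v @ [a])) has_sum L v) UNIV"
proof -
  have "(L has_sum L v) (range (\<lambda>a. v @ [a]))"
  proof (rule has_sum_L_if_tendsto)
    have "block_freq z (range (\<lambda>a. v @ [a])) (Suc (length v)) m = block_freq z {v} (length v) m" for m
      using block_count_append_letter[of z v m] by (simp add: block_freq_def)
    then show "(\<lambda>k. block_freq z (range (\<lambda>a. v @ [a])) (Suc (length v)) (R k)) \<longlonglongrightarrow> L v"
      using tendsto_L by simp
  qed auto
  then show ?thesis
    by (subst (asm) has_sum_reindex) (auto simp: inj_def o_def)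
qed

text \<open>Shift invariance of the limit: a block and the set of its one-letter left extensions
  have asymptotically equal frequencies.\<close>
lemma has_sum_L_Cons: "((\<lambda>b. L (b # w)) has_sum L w) UNIV"
proof -
  have "(L has_sum L w) (range (\<lambda>b. b # w))"
  proof (rule has_sum_L_if_tendsto)
    let ?f = "\<lambda>k. block_freq z (range (\<lambda>b. b # w)) (Suc (length w)) (R k)"
    have "(\<lambda>k. ?f k - block_freq z {w} (length w) (R k)) \<longlonglongrightarrow> 0"
    proof (rule Lim_null_comparison)
      show "eventually (\<lambda>k. norm (?f k - block_freq z {w} (length w) (R k)) \<le> 1 / real (R k)) sequentially"
        using block_freq_prepend_letter[of z w] by simp
      show "(\<lambda>k. 1 / real (R k)) \<longlonglongrightarrow> 0"
        using LIMSEQ_subseq_LIMSEQ[OF lim_1_over_n strict_mono_R] by (simp add: o_def)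
    qed
    from tendsto_add[OF this tendsto_L[of w]] show "?f \<longlonglongrightarrow> L w"
      by simp
  qed auto
  then show ?thesis
    by (subst (asm) has_sum_reindex) (auto simp: inj_def o_def)
qed

sublocale consistent_cylinder_weights L
  by unfold_locales (simp_all add: L_nonneg L_Nil has_sum_L_append)

lemma measure_cylinder_measure_block_set:
  assumes "W \<subseteq> {w. length w = n}"
  shows "measure cylinder_measure {\<omega>. block \<omega> 0 n \<in> W} = infsum L W"
  using has_sum_measure_cylinder[OF prob_space.finite_measure[OF prob_space_cylinder_measure]
      sets_cylinder_measure assms]
  by (simp add: measure_cylinder_measure infsumI)

lemma distr_shift_cylinder_measure: "distr cylinder_measure seq_space shift = cylinder_measure"
  by (rule distr_shift_eq_if_cylinder)
    (simp_all add: prob_space_cylinder_measure sets_cylinder_measure measure_cylinder_measure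
      has_sum_L_Cons)

end

definition prefix_set :: "(nat \<Rightarrow> 'b) \<Rightarrow> nat \<Rightarrow> (nat \<Rightarrow> 'b) set" where
  "prefix_set c n = {a. \<forall>j<n. a j = c j}"

section \<open>Measures derived from a set\<close>

lemma topspace_cantor_top [simp]: "topspace cantor_top = UNIV"
  by (simp add: cantor_top_def)

lemma openin_cantor_top_prefix_set: "openin cantor_top (prefix_set c n)"
proof -
  define U where "U j = (if j < n then {c j} else UNIV)" for j
  have "finite {i \<in> UNIV. U i \<noteq> topspace (discrete_topology UNIV)}"
    by (rule finite_subset[of _ "{..<n}"]) (auto simp: U_def)
  moreover have "x \<in> Pi\<^sub>E UNIV U" if "x \<in> prefix_set c n" for x
    using that by (simp add: U_def prefix_set_def PiE_iff)
  moreover have "Pi\<^sub>E UNIV U \<subseteq> prefix_set c n"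
  proof
    fix x
    assume "x \<in> Pi\<^sub>E UNIV U"
    then have x: "x j \<in> U j" for j
      by (simp add: PiE_iff)
    have "x j = c j" if "j < n" for j
      using x[of j] that by (simp add: U_def)
    then show "x \<in> prefix_set c n"
      by (simp add: prefix_set_def)
  qed
  ultimately show ?thesis
    unfolding cantor_top_def openin_product_topology_alt by (intro ballI exI[of _ U]) auto
qed

lemma openin_cantor_top_imp_prefix_set:
  assumes "openin cantor_top U" "c \<in> U"
  shows "\<exists>n. prefix_set c n \<subseteq> U"
proof -
  have "\<exists>V. finite {i \<in> UNIV. V i \<noteq> topspace (discrete_topology UNIV)} \<and>
      (\<forall>i\<in>UNIV. openin (discrete_topology UNIV) (V i)) \<and> c \<in> Pi\<^sub>E UNIV V \<and> Pi\<^sub>E UNIV V \<subseteq> U"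
    using assms unfolding cantor_top_def openin_product_topology_alt by blast
  then obtain V where V: "finite {i. V i \<noteq> UNIV}" "c \<in> Pi\<^sub>E UNIV V" "Pi\<^sub>E UNIV V \<subseteq> U"
    by auto
  obtain n where n: "{i. V i \<noteq> UNIV} \<subseteq> {..<n}"
    using finite_nat_bounded[OF V(1)] by blast
  have "prefix_set c n \<subseteq> Pi\<^sub>E UNIV V"
  proof
    fix a
    assume a: "a \<in> prefix_set c n"
    have "a i \<in> V i" for i
    proof (cases "i < n")
      case True
      then show ?thesis
        using a V(2) by (auto simp: prefix_set_def PiE_iff)
    next
      case False
      then have "V i = UNIV"
        using n by auto
      then show ?thesis
        by simp
    qed
    then show "a \<in> Pi\<^sub>E UNIV V"
      by (simp add: PiE_iff)
  qed
  with V(3) show ?thesis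
    by blast
qed

text \<open>Uniform continuity, by compactness of \<open>{0,1}\<^sup>\<nat>\<close>.\<close>
lemma continuous_cantor_top_uniformly:
  assumes f: "continuous_map cantor_top euclideanreal f" and "0 < e"
  shows "\<exists>N. \<forall>a b. (\<forall>j<N. a j = b j) \<longrightarrow> \<bar>f a - f b\<bar> < e"
proof -
  have "\<forall>c. \<exists>n. prefix_set c n \<subseteq> {a. \<bar>f a - f c\<bar> < e / 2}"
  proof
    fix c
    have "openin cantor_top {a. f a \<in> ball (f c) (e / 2)}"
      using openin_continuous_map_preimage[OF f, of "ball (f c) (e / 2)"] by simp
    from openin_cantor_top_imp_prefix_set[OF this, of c] \<open>0 < e\<close>
    show "\<exists>n. prefix_set c n \<subseteq> {a. \<bar>f a - f c\<bar> < e / 2}"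
      by (auto simp: dist_real_def abs_minus_commute)
  qed
  from choice[OF this] obtain nf where "\<forall>c. prefix_set c (nf c) \<subseteq> {a. \<bar>f a - f c\<bar> < e / 2}"
    by blast
  then have nf: "\<bar>f a - f c\<bar> < e / 2" if "a \<in> prefix_set c (nf c)" for a c
    using that by blast
  have "compact_space cantor_top"
    unfolding cantor_top_def compact_space_product_topology by (simp add: compact_space_discrete_topology)
  then have compact: "compactin cantor_top UNIV"
    by (simp add: compact_space_def)
  have "a \<in> prefix_set a (nf a)" for a
    by (simp add: prefix_set_def)
  then have cover: "UNIV \<subseteq> \<Union>(range (\<lambda>c. prefix_set c (nf c)))"
    by blast
  have "\<exists>\<F>. finite \<F> \<and> \<F> \<subseteq> range (\<lambda>c. prefix_set c (nf c)) \<and> UNIV \<subseteq> \<Union>\<F>"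
    by (rule compactinD[OF compact _ cover]) (auto simp: openin_cantor_top_prefix_set)
  then obtain \<F> where \<F>: "finite \<F>" "\<F> \<subseteq> range (\<lambda>c. prefix_set c (nf c))" "UNIV \<subseteq> \<Union>\<F>"
    by blast
  from finite_subset_image[OF \<F>(1,2)] obtain C where C: "finite C" "\<F> = (\<lambda>c. prefix_set c (nf c)) ` C"
    by blast
  show ?thesis
  proof (intro exI allI impI)
    fix a b :: "nat \<Rightarrow> bool"
    assume ab: "\<forall>j<Max (nf ` C). a j = b j"
    obtain c where c: "c \<in> C" "a \<in> prefix_set c (nf c)"
      using \<F>(3) C(2) by blast
    have "nf c \<le> Max (nf ` C)"
      using C(1) c(1) by simp
    then have "b j = c j" if "j < nf c" for j
      using ab[rule_format, of j] c(2) that by (simp add: prefix_set_def)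
    then have "b \<in> prefix_set c (nf c)"
      by (simp add: prefix_set_def)
    then show "\<bar>f a - f b\<bar> < e"
      using nf[OF c(2)] nf[of b c] by linarith
  qed
qed

lemma continuous_cantor_top_block_approx:
  assumes "continuous_map cantor_top euclideanreal f" "0 < e"
  shows "\<exists>N h. \<forall>a. \<bar>f a - h (block a 0 N)\<bar> < e"
proof -
  obtain N where N: "\<And>a b. (\<forall>j<N. a j = b j) \<Longrightarrow> \<bar>f a - f b\<bar> < e"
    using continuous_cantor_top_uniformly[OF assms] by blast
  have "\<bar>f a - f (\<lambda>j. if j < N then block a 0 N ! j else False)\<bar> < e" for a
    by (rule N) simp
  then show ?thesis
    by (intro exI[of _ N] exI[of _ "\<lambda>v. f (\<lambda>j. if j < N then v ! j else False)"]) simp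
qed

lemma integral_block_fun:
  fixes M :: "(nat \<Rightarrow> 'b::finite) measure" and h :: "'b list \<Rightarrow> real"
  assumes "prob_space M" and sets_M: "sets M = sets seq_space"
  shows "integrable M (\<lambda>\<omega>. h (block \<omega> 0 n))"
    and "integral\<^sup>L M (\<lambda>\<omega>. h (block \<omega> 0 n)) = (\<Sum>v\<in>{v. length v = n}. h v * measure M (cylinder v))"
proof -
  interpret prob_space M by fact
  note fin = finite_lists_length[where 'b = 'b and n = n]
  have block_fun: "h (block \<omega> 0 n) = (\<Sum>v\<in>{v. length v = n}. h v * indicator (cylinder v) \<omega>)" for \<omega>
  proof -
    have "(\<Sum>v\<in>{v. length v = n}. h v * indicator (cylinder v) \<omega>)
        = (\<Sum>v\<in>{v. length v = n}. if block \<omega> 0 n = v then h v else 0)"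
      by (intro sum.cong) (auto simp: cylinder_eq_block indicator_def)
    then show ?thesis
      by (simp add: sum.delta'[OF fin])
  qed
  have integrable_summand: "integrable M (\<lambda>\<omega>. h v * indicator (cylinder v) \<omega>)" for v
    using sets_M by (intro integrable_mult_right integrable_real_indicator) (auto simp: less_top[symmetric])
  then show "integrable M (\<lambda>\<omega>. h (block \<omega> 0 n))"
    unfolding block_fun by (rule Bochner_Integration.integrable_sum)
  show "integral\<^sup>L M (\<lambda>\<omega>. h (block \<omega> 0 n)) = (\<Sum>v\<in>{v. length v = n}. h v * measure M (cylinder v))"
    unfolding block_fun using integrable_summand sets_M
    by (subst Bochner_Integration.integral_sum) auto
qed

lemma borel_measurable_continuous_cantor_top:
  assumes f: "continuous_map cantor_top euclideanreal f" and sets_M: "sets M = sets seq_space"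
  shows "f \<in> borel_measurable M"
proof -
  have "\<forall>k. \<exists>N h. \<forall>a. \<bar>f a - h (block a 0 N)\<bar> < inverse (real (Suc k))"
    using continuous_cantor_top_block_approx[OF f] by simp
  then obtain N h where approx: "\<And>k a. \<bar>f a - h k (block a 0 (N k))\<bar> < inverse (real (Suc k))"
    by metis
  show ?thesis
  proof (rule borel_measurable_LIMSEQ_real)
    show "(\<lambda>k. h k (block a 0 (N k))) \<longlonglongrightarrow> f a" for a
    proof -
      have "(\<lambda>k. h k (block a 0 (N k)) - f a) \<longlonglongrightarrow> 0"
      proof (rule Lim_null_comparison)
        show "eventually (\<lambda>k. norm (h k (block a 0 (N k)) - f a) \<le> inverse (real (Suc k))) sequentially"
          using approx[of a] by (intro always_eventually allI) (simp add: abs_minus_commute less_imp_le)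
      qed (rule LIMSEQ_inverse_real_of_nat)
      from tendsto_add[OF this tendsto_const[of "f a"]] show ?thesis
        by simp
    qed
    show "(\<lambda>a. h k (block a 0 (N k))) \<in> borel_measurable M" for k
      using measurable_block by (simp add: measurable_cong_sets[OF sets_M refl])
  qed
qed

lemma integrable_continuous_cantor_top:
  assumes f: "continuous_map cantor_top euclideanreal f"
    and "prob_space M" and sets_M: "sets M = sets seq_space"
  shows "integrable M f"
proof -
  interpret prob_space M by fact
  obtain N h where h: "\<And>a. \<bar>f a - h (block a 0 N)\<bar> < 1"
    using continuous_cantor_top_block_approx[OF f, of 1] by auto
  note fin = finite_lists_length[where 'b = bool and n = N]
  have "\<bar>f a\<bar> \<le> (\<Sum>v\<in>{v. length v = N}. \<bar>h v\<bar>) + 1" for a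
    using h[of a] member_le_sum[OF _ _ fin, of "block a 0 N" "\<lambda>v. \<bar>h v\<bar>"] by simp
  then show ?thesis
    by (intro integrable_const_bound AE_I2 borel_measurable_continuous_cantor_top[OF f sets_M])
      simp
qed

lemma tendsto_average_uniform_approx:
  fixes f :: "'x \<Rightarrow> real" and p :: "nat \<Rightarrow> 'x" and R :: "nat \<Rightarrow> nat"
  assumes "prob_space M" "integrable M f"
    and approx: "\<And>e. 0 < e \<Longrightarrow> \<exists>g. integrable M g \<and> (\<forall>\<omega>. \<bar>f \<omega> - g \<omega>\<bar> \<le> e) \<and>
      (\<lambda>k. (\<Sum>i<R k. g (p i)) / real (R k)) \<longlonglongrightarrow> integral\<^sup>L M g"
  shows "(\<lambda>k. (\<Sum>i<R k. f (p i)) / real (R k)) \<longlonglongrightarrow> integral\<^sup>L M f"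
proof (rule tendstoI)
  interpret prob_space M by fact
  fix e :: real
  assume "0 < e"
  then obtain g where g: "integrable M g" "\<And>\<omega>. \<bar>f \<omega> - g \<omega>\<bar> \<le> e / 3"
    and lim: "(\<lambda>k. (\<Sum>i<R k. g (p i)) / real (R k)) \<longlonglongrightarrow> integral\<^sup>L M g"
    using approx[of "e / 3"] by auto
  have integral: "\<bar>integral\<^sup>L M f - integral\<^sup>L M g\<bar> \<le> e / 3"
  proof -
    have "\<bar>integral\<^sup>L M f - integral\<^sup>L M g\<bar> = \<bar>integral\<^sup>L M (\<lambda>\<omega>. f \<omega> - g \<omega>)\<bar>"
      using assms(2) g(1) by simp
    also have "\<dots> \<le> integral\<^sup>L M (\<lambda>\<omega>. \<bar>f \<omega> - g \<omega>\<bar>)"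
      by (rule integral_abs_bound)
    also have "\<dots> \<le> integral\<^sup>L M (\<lambda>_. e / 3)"
      using assms(2) g by (intro integral_mono) auto
    finally show ?thesis
      by (simp add: prob_space)
  qed
  moreover have average: "\<bar>(\<Sum>i<m. f (p i)) / real m - (\<Sum>i<m. g (p i)) / real m\<bar> \<le> e / 3" for m
  proof -
    have "\<bar>\<Sum>i<m. f (p i) - g (p i)\<bar> \<le> (\<Sum>i<m. \<bar>f (p i) - g (p i)\<bar>)"
      by (rule sum_abs)
    also have "\<dots> \<le> (\<Sum>i<m. e / 3)"
      by (intro sum_mono g(2))
    finally have "\<bar>\<Sum>i<m. f (p i) - g (p i)\<bar> \<le> real m * (e / 3)"
      by simp
    then show ?thesis
      using \<open>0 < e\<close> by (cases "m = 0") (simp_all add: diff_divide_distrib[symmetric] sum_subtractf abs_divide field_simps)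
  qed
  have "eventually (\<lambda>k. dist ((\<Sum>i<R k. g (p i)) / real (R k)) (integral\<^sup>L M g) < e / 3) sequentially"
    using \<open>0 < e\<close> by (intro tendstoD[OF lim]) simp
  then show "eventually (\<lambda>k. dist ((\<Sum>i<R k. f (p i)) / real (R k)) (integral\<^sup>L M f) < e) sequentially"
  proof eventually_elim
    case (elim k)
    then show ?case
      using average[of "R k"] integral unfolding dist_real_def abs_le_iff abs_less_iff by linarith
  qed
qed

lemma derived_measureI:
  assumes "prob_space \<nu>" and sets_\<nu>: "sets \<nu> = sets seq_space" and "strict_mono R"
    and freq: "\<And>v. (\<lambda>k. block_freq (\<lambda>n. n \<in> S) {v} (length v) (R k)) \<longlonglongrightarrow> measure \<nu> (cylinder v)"
  shows "derived_measure S \<nu>"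
  unfolding derived_measure_def
proof (intro conjI exI[of _ R] allI impI)
  fix f
  assume f: "continuous_map cantor_top euclideanreal f"
  let ?y = "\<lambda>n. n \<in> S"
  show "(\<lambda>k. (\<Sum>i<R k. f ((shift ^^ i) ?y)) / real (R k)) \<longlonglongrightarrow> integral\<^sup>L \<nu> f"
  proof (rule tendsto_average_uniform_approx)
    fix e :: real
    assume "0 < e"
    obtain N h where h: "\<And>a. \<bar>f a - h (block a 0 N)\<bar> < e"
      using continuous_cantor_top_block_approx[OF f \<open>0 < e\<close>] by blast
    have "(\<lambda>k. (\<Sum>i<R k. h (block ((shift ^^ i) ?y) 0 N)) / real (R k))
        \<longlonglongrightarrow> integral\<^sup>L \<nu> (\<lambda>\<omega>. h (block \<omega> 0 N))"
    proof -
      have "(\<Sum>i<m. h (block ((shift ^^ i) ?y) 0 N)) / real m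
          = (\<Sum>v\<in>{v. length v = N}. h v * block_freq ?y {v} N m)" for m
        by (simp add: block_shift_power sum_block_fun block_freq_def sum_divide_distrib)
      moreover have "(\<lambda>k. \<Sum>v\<in>{v. length v = N}. h v * block_freq ?y {v} N (R k))
          \<longlonglongrightarrow> (\<Sum>v\<in>{v. length v = N}. h v * measure \<nu> (cylinder v))"
        using freq by (intro tendsto_sum tendsto_mult_left) auto
      ultimately show ?thesis
        by (simp add: integral_block_fun[OF \<open>prob_space \<nu>\<close> sets_\<nu>])
    qed
    then show "\<exists>g. integrable \<nu> g \<and> (\<forall>\<omega>. \<bar>f \<omega> - g \<omega>\<bar> \<le> e) \<and>
        (\<lambda>k. (\<Sum>i<R k. g ((shift ^^ i) ?y)) / real (R k)) \<longlonglongrightarrow> integral\<^sup>L \<nu> g"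
      using h[THEN less_imp_le] integral_block_fun[OF \<open>prob_space \<nu>\<close> sets_\<nu>]
      by (intro exI[of _ "\<lambda>\<omega>. h (block \<omega> 0 N)"]) auto
  qed (use assms f integrable_continuous_cantor_top in auto)
qed (use assms in auto)

lemma finite_vimage_fst_bool: "finite (fst -` {c} :: ('a \<times> bool) set)"
proof -
  have "fst -` {c} = {(c, False), (c, True)}"
    by (auto intro: prod_eqI)
  then show ?thesis
    by simp
qed

section \<open>Joinings from joint block frequencies\<close>

text \<open>The limit measure on pair sequences is a joining of \<open>\<mu>\<close> with a measure derived from the
  set \<open>{n. snd (z n)}\<close>.\<close>
locale joint_block_frequency_limits = block_frequency_limits z R L
  for z :: "nat \<Rightarrow> 'a::countable \<times> bool" and R L +
  fixes \<mu> :: "(nat \<Rightarrow> 'a) measure"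
  assumes prob_space_\<mu>: "prob_space \<mu>" and sets_\<mu>: "sets \<mu> = sets seq_space"
    and tendsto_fst: "(\<lambda>k. block_freq (fst \<circ> z) {u} (length u) (R k)) \<longlonglongrightarrow> measure \<mu> (cylinder u)"
begin

sublocale tight_block_frequency_limits z R L
  by unfold_locales
    (rule infsum_L_eq_1[OF prob_space_\<mu> sets_\<mu> finite_vimage_fst_bool tendsto_fst])

lemma measurable_letter_map:
  fixes p :: "'a \<times> bool \<Rightarrow> 'x"
  shows "(\<lambda>\<omega> i. p (\<omega> i)) \<in> measurable cylinder_measure seq_space"
  using measurable_seq_map[of p "\<lambda>i. i"] by (simp add: measurable_cong_sets[OF sets_cylinder_measure refl])

lemma measure_distr_letter_map:
  fixes p :: "'a \<times> bool \<Rightarrow> 'x"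
  shows "measure (distr cylinder_measure seq_space (\<lambda>\<omega> i. p (\<omega> i))) (cylinder u) = infsum L {w. map p w = u}"
proof -
  have "measure (distr cylinder_measure seq_space (\<lambda>\<omega> i. p (\<omega> i))) (cylinder u)
      = measure cylinder_measure ((\<lambda>\<omega> i. p (\<omega> i)) -` cylinder u \<inter> space cylinder_measure)"
    by (rule measure_distr[OF measurable_letter_map sets_cylinder])
  also have "(\<lambda>\<omega> i. p (\<omega> i)) -` cylinder u \<inter> space cylinder_measure
      = {\<omega>. block \<omega> 0 (length u) \<in> {w. map p w = u}}"
    by (auto simp: sets_eq_imp_space_eq[OF sets_cylinder_measure] cylinder_eq_block map_block o_def)
  also have "measure cylinder_measure \<dots> = infsum L {w. map p w = u}"
    by (rule measure_cylinder_measure_block_set) auto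
  finally show ?thesis .
qed

definition snd_marginal :: "(nat \<Rightarrow> bool) measure" where
  "snd_marginal = distr cylinder_measure seq_space (\<lambda>\<omega> i. snd (\<omega> i))"

lemma sets_snd_marginal [measurable_cong]: "sets snd_marginal = sets seq_space"
  by (simp add: snd_marginal_def)

lemma prob_space_snd_marginal: "prob_space snd_marginal"
  unfolding snd_marginal_def
  by (rule prob_space.prob_space_distr[OF prob_space_cylinder_measure]) (rule measurable_letter_map)

lemma tendsto_snd_marginal:
  "(\<lambda>k. block_freq (snd \<circ> z) {v} (length v) (R k)) \<longlonglongrightarrow> measure snd_marginal (cylinder v)"
proof -
  have "block_freq (snd \<circ> z) {v} (length v) m = block_freq z {w. map snd w = v} (length v) m" for m
    by (simp add: block_freq_def block_count_def map_block)
  moreover have "{w. map snd w = v} \<subseteq> {w. length w = length v}"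
    by auto
  ultimately show ?thesis
    using tendsto_infsum_L by (simp add: snd_marginal_def measure_distr_letter_map)
qed

lemma distr_fst_cylinder_measure: "distr cylinder_measure \<mu> (\<lambda>\<omega> i. fst (\<omega> i)) = \<mu>"
proof (rule seq_space_measure_eqI)
  have fst: "(\<lambda>\<omega> i. fst (\<omega> i)) \<in> measurable cylinder_measure \<mu>"
    using measurable_letter_map by (simp add: measurable_cong_sets[OF refl sets_\<mu>])
  interpret distr: prob_space "distr cylinder_measure \<mu> (\<lambda>\<omega> i. fst (\<omega> i))"
    by (rule prob_space.prob_space_distr[OF prob_space_cylinder_measure fst])
  show "sets (distr cylinder_measure \<mu> (\<lambda>\<omega> i. fst (\<omega> i))) = sets seq_space" "sets \<mu> = sets seq_space"
    by (simp_all add: sets_\<mu>)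
  show "finite_measure (distr cylinder_measure \<mu> (\<lambda>\<omega> i. fst (\<omega> i)))"
    by unfold_locales
  fix u :: "'a list"
  have "distr cylinder_measure \<mu> (\<lambda>\<omega> i. fst (\<omega> i)) = distr cylinder_measure seq_space (\<lambda>\<omega> i. fst (\<omega> i))"
    by (rule distr_cong) (simp_all add: sets_\<mu>)
  then have "measure (distr cylinder_measure \<mu> (\<lambda>\<omega> i. fst (\<omega> i))) (cylinder u) = sum L {w. map fst w = u}"
    by (simp add: measure_distr_letter_map infsum_finite[OF finite_vimage_map[OF finite_vimage_fst_bool]])
  also have "\<dots> = measure \<mu> (cylinder u)"
    by (rule sum_L_vimage_map[OF finite_vimage_fst_bool tendsto_fst])
  finally show "emeasure (distr cylinder_measure \<mu> (\<lambda>\<omega> i. fst (\<omega> i))) (cylinder u) = emeasure \<mu> (cylinder u)"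
    by (simp add: distr.emeasure_eq_measure
        finite_measure.emeasure_eq_measure[OF prob_space.finite_measure[OF prob_space_\<mu>]])
qed

definition unzip :: "(nat \<Rightarrow> 'a \<times> bool) \<Rightarrow> (nat \<Rightarrow> 'a) \<times> (nat \<Rightarrow> bool)" where
  "unzip \<omega> = ((\<lambda>i. fst (\<omega> i)), (\<lambda>i. snd (\<omega> i)))"

definition joining :: "((nat \<Rightarrow> 'a) \<times> (nat \<Rightarrow> bool)) measure" where
  "joining = distr cylinder_measure (\<mu> \<Otimes>\<^sub>M snd_marginal) unzip"

lemma measurable_unzip: "unzip \<in> measurable cylinder_measure (\<mu> \<Otimes>\<^sub>M snd_marginal)"
  using measurable_letter_map[of fst] measurable_letter_map[of snd] unfolding unzip_def
  by (intro measurable_Pair) (simp_all add: measurable_cong_sets[OF refl sets_\<mu>]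
      measurable_cong_sets[OF refl sets_snd_marginal])

lemma distr_shift_joining:
  "distr joining (\<mu> \<Otimes>\<^sub>M snd_marginal) (map_prod shift shift) = joining"
proof -
  have shift_\<mu>: "shift \<in> measurable \<mu> \<mu>" and shift_marginal: "shift \<in> measurable snd_marginal snd_marginal"
    using measurable_shift by (simp_all add: measurable_cong_sets[OF sets_\<mu> sets_\<mu>]
        measurable_cong_sets[OF sets_snd_marginal sets_snd_marginal])
  have "map_prod shift shift = (\<lambda>x. (shift (fst x), shift (snd x)))"
    by (simp add: fun_eq_iff)
  also have "\<dots> \<in> measurable (\<mu> \<Otimes>\<^sub>M snd_marginal) (\<mu> \<Otimes>\<^sub>M snd_marginal)"
    by (intro measurable_Pair measurable_compose[OF measurable_fst shift_\<mu>]
        measurable_compose[OF measurable_snd shift_marginal])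
  finally have "map_prod shift shift \<in> measurable (\<mu> \<Otimes>\<^sub>M snd_marginal) (\<mu> \<Otimes>\<^sub>M snd_marginal)" .
  then have "distr joining (\<mu> \<Otimes>\<^sub>M snd_marginal) (map_prod shift shift)
      = distr cylinder_measure (\<mu> \<Otimes>\<^sub>M snd_marginal) (map_prod shift shift \<circ> unzip)"
    unfolding joining_def by (rule distr_distr[OF _ measurable_unzip])
  also have "map_prod shift shift \<circ> unzip = unzip \<circ> shift"
    by (simp add: fun_eq_iff unzip_def shift_def)
  also have "distr cylinder_measure (\<mu> \<Otimes>\<^sub>M snd_marginal) (unzip \<circ> shift)
      = distr (distr cylinder_measure seq_space shift) (\<mu> \<Otimes>\<^sub>M snd_marginal) unzip"
    using measurable_shift measurable_unzip
    by (intro distr_distr[symmetric]) (simp_all add: measurable_cong_sets[OF sets_cylinder_measure refl])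
  finally show ?thesis
    by (simp add: distr_shift_cylinder_measure joining_def)
qed

lemma distr_fst_joining: "distr joining \<mu> fst = \<mu>"
proof -
  have "distr joining \<mu> fst = distr cylinder_measure \<mu> (fst \<circ> unzip)"
    unfolding joining_def by (rule distr_distr[OF measurable_fst measurable_unzip])
  then show ?thesis
    by (simp add: unzip_def o_def distr_fst_cylinder_measure)
qed

lemma distr_snd_joining: "distr joining snd_marginal snd = snd_marginal"
proof -
  have "distr joining snd_marginal snd = distr cylinder_measure snd_marginal (snd \<circ> unzip)"
    unfolding joining_def by (rule distr_distr[OF measurable_snd measurable_unzip])
  also have "\<dots> = snd_marginal"
    unfolding snd_marginal_def
    by (rule distr_cong) (simp_all add: unzip_def snd_marginal_def[symmetric] sets_snd_marginal)
  finally show ?thesis .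
qed

lemma derived_measure_snd_marginal: "derived_measure {n. snd (z n)} snd_marginal"
  using tendsto_snd_marginal
  by (intro derived_measureI[OF prob_space_snd_marginal sets_snd_marginal strict_mono_R]) (simp add: o_def)

lemma L_zip_eq_product:
  assumes "disjoint_measures \<mu> snd_marginal" and "length u = length v"
  shows "L (zip u v) = measure \<mu> (cylinder u) * measure snd_marginal (cylinder v)"
proof -
  interpret \<mu>: prob_space \<mu>
    by (rule prob_space_\<mu>)
  interpret snd_marginal: prob_space snd_marginal
    by (rule prob_space_snd_marginal)
  have product: "joining = \<mu> \<Otimes>\<^sub>M snd_marginal"
    using assms(1) distr_shift_joining distr_fst_joining distr_snd_joining
    unfolding disjoint_measures_def by (simp add: joining_def)
  have rectangle: "cylinder u \<times> cylinder v \<in> sets (\<mu> \<Otimes>\<^sub>M snd_marginal)"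
    by (simp add: sets_\<mu> sets_snd_marginal)
  have "unzip -` (cylinder u \<times> cylinder v) \<inter> space cylinder_measure = cylinder (zip u v)"
    using assms(2) by (auto simp: sets_eq_imp_space_eq[OF sets_cylinder_measure] cylinder_def unzip_def prod_eq_iff)
  then have "ennreal (L (zip u v)) = emeasure joining (cylinder u \<times> cylinder v)"
    by (simp add: joining_def emeasure_distr[OF measurable_unzip rectangle] emeasure_cylinder_measure)
  also have "\<dots> = emeasure \<mu> (cylinder u) * emeasure snd_marginal (cylinder v)"
    unfolding product by (rule snd_marginal.emeasure_pair_measure_Times) (simp_all add: sets_\<mu> sets_snd_marginal)
  also have "\<dots> = ennreal (measure \<mu> (cylinder u) * measure snd_marginal (cylinder v))"
    by (simp add: \<mu>.emeasure_eq_measure snd_marginal.emeasure_eq_measure ennreal_mult)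
  finally show ?thesis
    by (simp add: L_nonneg)
qed

end

section \<open>Frequencies along the restricted sequence\<close>

lemma LIMSEQ_if_subseq_LIMSEQ:
  fixes X :: "nat \<Rightarrow> 'x::metric_space"
  assumes "\<And>s :: nat \<Rightarrow> nat. strict_mono s \<Longrightarrow> \<exists>r :: nat \<Rightarrow> nat. strict_mono r \<and> (\<lambda>k. X (s (r k))) \<longlonglongrightarrow> l"
  shows "X \<longlonglongrightarrow> l"
proof (rule tendstoI, rule ccontr)
  fix e :: real
  assume "0 < e" and far: "\<not> eventually (\<lambda>n. dist (X n) l < e) sequentially"
  obtain s :: "nat \<Rightarrow> nat" where s: "strict_mono s" "\<forall>n. \<not> dist (X (s n)) l < e"
    using not_eventually_sequentiallyD[OF far] by blast
  then obtain r :: "nat \<Rightarrow> nat" where "(\<lambda>k. X (s (r k))) \<longlonglongrightarrow> l"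
    using assms by blast
  then have "eventually (\<lambda>k. dist (X (s (r k))) l < e) sequentially"
    using \<open>0 < e\<close> by (rule tendstoD)
  then show False
    using s(2) by (simp add: eventually_sequentially)
qed

lemma Bseq_convergent_diagonal_subseq:
  fixes g :: "nat \<Rightarrow> nat \<Rightarrow> real"
  assumes "\<And>n. Bseq (g n)"
  shows "\<exists>r. strict_mono r \<and> (\<forall>n. convergent (\<lambda>k. g n (r k)))"
proof -
  interpret subseqs "\<lambda>n s. convergent (\<lambda>k. g n (s k))"
  proof
    fix n and s :: "nat \<Rightarrow> nat"
    obtain f where f: "strict_mono f" "monoseq (\<lambda>k. g n (s (f k)))"
      using seq_monosub[of "\<lambda>k. g n (s k)"] by blast
    moreover have "Bseq (\<lambda>k. g n (s (f k)))"
      using assms Bseq_subseq by blast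
    ultimately show "\<exists>r'. strict_mono r' \<and> convergent (\<lambda>k. g n ((s \<circ> r') k))"
      using Bseq_monoseq_convergent by (auto simp: o_def)
  qed
  have "convergent (\<lambda>k. g n (diagseq k))" for n
  proof -
    have "convergent (\<lambda>i. g n ((diagseq \<circ> (+) (Suc n)) i))"
    proof (rule diagseq_holds)
      fix r s n
      assume "strict_mono (r :: nat \<Rightarrow> nat)" "convergent (\<lambda>k. g n (s k))"
      then show "convergent (\<lambda>k. g n ((s \<circ> r) k))"
        using convergent_subseq_convergent[of "\<lambda>k. g n (s k)" r] by (simp add: o_def)
    qed
    then show ?thesis
      using convergent_ignore_initial_segment[of "\<lambda>k. g n (diagseq k)" "Suc n"]
      by (simp add: o_def add.commute)
  qed
  then show ?thesis
    using subseq_diagseq by blast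
qed

text \<open>A diagonal argument over an enumeration of all blocks.\<close>
lemma exists_block_frequency_limits:
  fixes z :: "nat \<Rightarrow> 'b::countable" and M :: "nat \<Rightarrow> nat"
  assumes "strict_mono M"
  shows "\<exists>r L. strict_mono r \<and> block_frequency_limits z (M \<circ> r) L"
proof -
  define g :: "nat \<Rightarrow> nat \<Rightarrow> real" where "g j k = block_freq z {from_nat j} (length (from_nat j :: 'b list)) (M k)" for j k
  have "Bseq (g j)" for j
    by (rule BseqI'[of _ 1]) (simp add: g_def abs_of_nonneg block_freq_nonneg block_freq_le_1)
  then obtain r where r: "strict_mono r" "\<And>j. convergent (\<lambda>k. g j (r k))"
    using Bseq_convergent_diagonal_subseq by blast
  define L where "L w = lim (\<lambda>k. block_freq z {w} (length w) (M (r k)))" for w :: "'b list"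
  have "(\<lambda>k. block_freq z {w} (length w) ((M \<circ> r) k)) \<longlonglongrightarrow> L w" for w
    using r(2)[of "to_nat w"] by (simp add: g_def L_def convergent_LIMSEQ_iff)
  then have "block_frequency_limits z (M \<circ> r) L"
    using strict_mono_o[OF assms r(1)] by unfold_locales
  with r(1) show ?thesis
    by blast
qed

lemma block_freq_singleton:
  "block_freq z {[a]} 1 m = real (card {i. i < m \<and> z i = a}) / real m"
  by (simp add: block_freq_def block_count_def block_eq_iff)

lemma lower_density_le_subseq_limit:
  assumes "strict_mono R"
    and "(\<lambda>k. block_freq (\<lambda>n. n \<in> S) {[True]} 1 (R k)) \<longlonglongrightarrow> l"
  shows "lower_density S \<le> ereal l"
proof -
  have density: "real (card (S \<inter> {..<n})) / real n = block_freq (\<lambda>n. n \<in> S) {[True]} 1 n" for n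
    unfolding block_freq_singleton by (simp add: Int_def conj_commute)
  have "lower_density S \<le> liminf ((\<lambda>n. ereal (block_freq (\<lambda>n. n \<in> S) {[True]} 1 n)) \<circ> R)"
    unfolding lower_density_def density by (rule liminf_subseq_mono[OF assms(1)])
  also have "\<dots> = ereal l"
    using assms(2) by (intro lim_imp_Liminf) (simp_all add: o_def)
  finally show ?thesis .
qed

lemma infinite_if_lower_density_pos:
  assumes "lower_density S > 0"
  shows "infinite S"
proof
  assume "finite S"
  have "(\<lambda>n. real (card (S \<inter> {..<n})) / real n) \<longlonglongrightarrow> 0"
  proof (rule Lim_null_comparison)
    show "eventually (\<lambda>n. norm (real (card (S \<inter> {..<n})) / real n) \<le> real (card S) * (1 / real n)) sequentially"
    proof (intro always_eventually allI)
      fix n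
      have "card (S \<inter> {..<n}) \<le> card S"
        using \<open>finite S\<close> by (intro card_mono) auto
      then show "norm (real (card (S \<inter> {..<n})) / real n) \<le> real (card S) * (1 / real n)"
        by (simp add: divide_right_mono)
    qed
    show "(\<lambda>n. real (card S) * (1 / real n)) \<longlonglongrightarrow> 0"
      by (rule tendsto_mult_right_zero[OF lim_1_over_n])
  qed
  then have "lower_density S = 0"
    unfolding lower_density_def zero_ereal_def by (intro lim_imp_Liminf) (simp_all add: tendsto_ereal)
  with assms show False
    by simp
qed

lemma strict_mono_enumerate: "infinite (S :: nat set) \<Longrightarrow> strict_mono (enumerate S)"
  by (simp add: enumerate_mono strict_monoI)

lemma card_enumerate_less:
  fixes S :: "nat set"
  assumes "infinite S"
  shows "card {k. k < n \<and> P (enumerate S k)} = card {i. i < enumerate S n \<and> i \<in> S \<and> P i}"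
proof -
  note mono = strict_mono_enumerate[OF assms]
  have "enumerate S ` {k. k < n \<and> P (enumerate S k)} = {i. i < enumerate S n \<and> i \<in> S \<and> P i}"
  proof (intro equalityI subsetI)
    fix i
    assume i: "i \<in> {i. i < enumerate S n \<and> i \<in> S \<and> P i}"
    then obtain k where "enumerate S k = i"
      using enumerate_Ex[OF assms] by blast
    with i show "i \<in> enumerate S ` {k. k < n \<and> P (enumerate S k)}"
      using strict_mono_less[OF mono] by blast
  qed (use enumerate_in_set[OF assms] strict_mono_less[OF mono] in auto)
  moreover have "inj_on (enumerate S) {k. k < n \<and> P (enumerate S k)}"
    using strict_mono_imp_inj_on[OF mono] inj_on_subset by blast
  ultimately show ?thesis
    by (metis card_image)
qed

lemma restrict_seq_freq_eq_ratio:
  fixes S :: "nat set"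
  assumes "infinite S"
  shows "real (card {k. k < n \<and> restrict_seq x S k = a}) / real n
    = block_freq (\<lambda>i. (x i, i \<in> S)) {[(a, True)]} 1 (enumerate S n)
      / block_freq (\<lambda>i. i \<in> S) {[True]} 1 (enumerate S n)"
proof -
  have count: "card {k. k < n \<and> restrict_seq x S k = a} = card {i. i < enumerate S n \<and> (x i, i \<in> S) = (a, True)}"
    using card_enumerate_less[OF assms, of n "\<lambda>i. x i = a"] by (simp add: restrict_seq_def conj_ac)
  have card_S: "card {i. i < enumerate S n \<and> i \<in> S} = n"
    using card_enumerate_less[OF assms, of n "\<lambda>_. True"] by simp
  show ?thesis
  proof (cases "enumerate S n = 0")
    case True
    with card_S have "n = 0"
      by simp
    with True show ?thesis
      by (simp add: block_freq_def)
  next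
    case False
    have "(c / m) / (b / m) = c / b" if "m \<noteq> 0" for b c m :: real
      using that by (cases "b = 0") simp_all
    from this[of "real (enumerate S n)"] False card_S show ?thesis
      unfolding block_freq_singleton count by simp
  qed
qed

context joint_block_frequency_limits
begin

lemma lower_density_le_snd_marginal:
  "lower_density {n. snd (z n)} \<le> ereal (measure snd_marginal (cylinder [True]))"
  using lower_density_le_subseq_limit[OF strict_mono_R, of "{n. snd (z n)}"] tendsto_snd_marginal[of "[True]"]
  by (simp add: o_def)

lemma tendsto_freq_ratio:
  assumes "disjoint_measures \<mu> snd_marginal" and "lower_density {n. snd (z n)} > 0"
  shows "(\<lambda>k. block_freq z {[(a, True)]} 1 (R k) / block_freq (snd \<circ> z) {[True]} 1 (R k))
    \<longlonglongrightarrow> measure \<mu> (cylinder [a])"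
proof -
  have pos: "0 < measure snd_marginal (cylinder [True])"
    using assms(2) lower_density_le_snd_marginal by (metis ereal_less(2) less_le_trans)
  have "L [(a, True)] = measure \<mu> (cylinder [a]) * measure snd_marginal (cylinder [True])"
    using L_zip_eq_product[OF assms(1), of "[a]" "[True]"] by simp
  then have "(\<lambda>k. block_freq z {[(a, True)]} 1 (R k) / block_freq (snd \<circ> z) {[True]} 1 (R k))
      \<longlonglongrightarrow> measure \<mu> (cylinder [a]) * measure snd_marginal (cylinder [True]) / measure snd_marginal (cylinder [True])"
    using tendsto_L[of "[(a, True)]"] tendsto_snd_marginal[of "[True]"] pos
    by (intro tendsto_divide) auto
  then show ?thesis
    using pos by simp
qed

end

theorem mainTheorem7:
  fixes \<mu> :: "(nat \<Rightarrow> 'a::countable) measure" and S :: "nat set"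
  assumes "shift_invariant_prob \<mu>"
    and "lower_density S > 0"
    and "\<And>\<nu>. derived_measure S \<nu> \<Longrightarrow> disjoint_measures \<mu> \<nu>"
  shows "\<forall>x a. normal \<mu> x \<longrightarrow>
    (\<lambda>n. real (card {k. k < n \<and> restrict_seq x S k = a}) / real n)
      \<longlonglongrightarrow> measure \<mu> (cylinder [a])"
proof (intro allI impI LIMSEQ_if_subseq_LIMSEQ)
  fix x a and s :: "nat \<Rightarrow> nat"
  assume "normal \<mu> x" and "strict_mono s"
  have "infinite S"
    using assms(2) by (rule infinite_if_lower_density_pos)
  define z where "z i = (x i, i \<in> S)" for i
  obtain r L where "strict_mono r" and limits: "block_frequency_limits z (enumerate S \<circ> s \<circ> r) L"
    using exists_block_frequency_limits[OF strict_mono_o[OF strict_mono_enumerate[OF \<open>infinite S\<close>]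
        \<open>strict_mono s\<close>], of z] by blast
  have "(\<lambda>k. block_freq (fst \<circ> z) {u} (length u) ((enumerate S \<circ> s \<circ> r) k)) \<longlonglongrightarrow> measure \<mu> (cylinder u)" for u
    using block_frequency_limits.tendsto_block_freq_R[OF limits normal_imp_tendsto_block_freq[OF \<open>normal \<mu> x\<close>]]
    by (simp add: z_def o_def)
  with limits assms(1) interpret joint_block_frequency_limits z "enumerate S \<circ> s \<circ> r" L \<mu>
    by (intro joint_block_frequency_limits.intro joint_block_frequency_limits_axioms.intro)
      (simp_all add: shift_invariant_prob_def)
  have "{n. snd (z n)} = S"
    by (simp add: z_def)
  then have "(\<lambda>k. block_freq z {[(a, True)]} 1 ((enumerate S \<circ> s \<circ> r) k)
      / block_freq (snd \<circ> z) {[True]} 1 ((enumerate S \<circ> s \<circ> r) k)) \<longlonglongrightarrow> measure \<mu> (cylinder [a])"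
    using derived_measure_snd_marginal assms(2,3) by (intro tendsto_freq_ratio) simp_all
  then show "\<exists>r. strict_mono r \<and>
      (\<lambda>k. real (card {j. j < s (r k) \<and> restrict_seq x S j = a}) / real (s (r k))) \<longlonglongrightarrow> measure \<mu> (cylinder [a])"
    using \<open>strict_mono r\<close> by (auto simp: restrict_seq_freq_eq_ratio[OF \<open>infinite S\<close>] z_def[abs_def] o_def)
qed

end
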